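(* (i) For every abstract storage device $D$, $C(D)=\max_{\pi\in\mathcal{P}_D}\log|\pi|$. (ii) For all ASDs $D,D'$, $C(D\times D')=C(D)+C(D')$. (iii) For every ASD $D$ and every integer $k\ge1$, $C(D^{(k)})\le k\cdot C(D)$.
   Context: An abstract storage device (ASD) is a pair $D=(\mathcal{S}_D,\mathcal{P}_D)$, $\mathcal{S}_D$ a finite set and $\mathcal{P}_D$ a finite family of partitions of $\mathcal{S}_D$; $|\pi|$ is the number of blocks. For a partition $\pi$ of $\mathcal{S}'$ and $\phi:\mathcal{S}\to\mathcal{S}'$, $\pi\circ\phi$ is the partition of $\mathcal{S}$ with $x,y$ in the same block iff $\phi(x),\phi(y)$ are in the same block of $\pi$; $\pi\preceq\rho$ means every block of $\pi$ lies in a block of $\rho$; $\wedge$ is the meet of partitions. $D\le D'$ means there exist $\phi:\mathcal{S}_D\to\mathcal{S}_{D'}$, $\alpha:\mathcal{P}_D\to\mathcal{P}_{D'}$ with $\alpha(\pi)\circ\phi\preceq\pi$ for all $\pi\in\mathcal{P}_D$. $C_m$ is the ASD with state space $\{1,\dots,m\}$ and partition set $\{\{\{1\},\dots,\{m\}\}\}$. The storage capacity is $C(D)=\max\{\log m: m\in\mathbb{N}, C_m\le D\}$ (log base 2). The direct product $D\times D'$ has state space $\mathcal{S}_D\times\mathcal{S}_{D'}$ and partition set $\{\pi\times\pi'\}$ with $\pi\times\pi'=\{B\times B':B\in\pi,B'\in\pi'\}$. $D^{(k)}$ has state space $\mathcal{S}_D$ and partition set $\{\pi_1\wedge\cdots\wedge\pi_k:\pi_i\in\mathcal{P}_D\}$.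 *)

theory Defs
  imports "HOL-Analysis.Analysis" "HOL-Library.Disjoint_Sets"
begin

definition asd :: "'a set \<Rightarrow> 'a set set set \<Rightarrow> bool" where
  "asd S P \<longleftrightarrow> finite S \<and> finite P \<and> (\<forall>\<pi>\<in>P. partition_on S \<pi>)"

definition same_block :: "'a set set \<Rightarrow> 'a \<Rightarrow> 'a \<Rightarrow> bool" where
  "same_block \<pi> x y \<longleftrightarrow> (\<exists>B\<in>\<pi>. x \<in> B \<and> y \<in> B)"

definition part_comp :: "'b set set \<Rightarrow> ('a \<Rightarrow> 'b) \<Rightarrow> 'a set \<Rightarrow> 'a set set" where
  "part_comp \<pi> \<phi> S = (\<lambda>x. {y \<in> S. same_block \<pi> (\<phi> x) (\<phi> y)}) ` S"

definition refines :: "'a set set \<Rightarrow> 'a set set \<Rightarrow> bool" where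
  "refines \<pi> \<rho> \<longleftrightarrow> (\<forall>B\<in>\<pi>. \<exists>B'\<in>\<rho>. B \<subseteq> B')"

definition asd_le :: "'a set \<Rightarrow> 'a set set set \<Rightarrow> 'b set \<Rightarrow> 'b set set set \<Rightarrow> bool" where
  "asd_le S P S' P' \<longleftrightarrow> (\<exists>\<phi> \<alpha>. \<phi> \<in> S \<rightarrow> S' \<and> \<alpha> \<in> P \<rightarrow> P' \<and>
      (\<forall>\<pi>\<in>P. refines (part_comp (\<alpha> \<pi>) \<phi> S) \<pi>))"

definition cm_states :: "nat \<Rightarrow> nat set" where
  "cm_states m = {1..m}"

definition cm_parts :: "nat \<Rightarrow> nat set set set" where
  "cm_parts m = {(\<lambda>i. {i}) ` {1..m}}"

definition capacity :: "'a set \<Rightarrow> 'a set set set \<Rightarrow> real" where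
  "capacity S P = Max ((\<lambda>m. log 2 (real m)) ` {m. m \<ge> 1 \<and> asd_le (cm_states m) (cm_parts m) S P})"

definition prod_part :: "'a set set \<Rightarrow> 'b set set \<Rightarrow> ('a \<times> 'b) set set" where
  "prod_part \<pi> \<pi>' = {B \<times> B' | B B'. B \<in> \<pi> \<and> B' \<in> \<pi>'}"

definition prod_parts :: "'a set set set \<Rightarrow> 'b set set set \<Rightarrow> ('a \<times> 'b) set set set" where
  "prod_parts P P' = {prod_part \<pi> \<pi>' | \<pi> \<pi>'. \<pi> \<in> P \<and> \<pi>' \<in> P'}"

definition meet :: "'a set set \<Rightarrow> 'a set set \<Rightarrow> 'a set set" where
  "meet \<pi> \<rho> = {A \<inter> B | A B. A \<in> \<pi> \<and> B \<in> \<rho> \<and> A \<inter> B \<noteq> {}}"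

fun meet_list :: "'a set set list \<Rightarrow> 'a set set" where
  "meet_list [] = {}"
| "meet_list [\<pi>] = \<pi>"
| "meet_list (\<pi> # \<pi>s) = meet \<pi> (meet_list \<pi>s)"

definition pow_parts :: "'a set set set \<Rightarrow> nat \<Rightarrow> 'a set set set" where
  "pow_parts P k = {meet_list \<pi>s | \<pi>s. length \<pi>s = k \<and> set \<pi>s \<subseteq> P}"

end

theory Submission imports Defs begin

text \<open>Embedding C_m into a device amounts to choosing m states that lie in pairwise distinct
  blocks of a single partition, so C_m \<le> D holds exactly when m is at most the largest
  number of blocks of a partition of D; this gives (i). Blocks of a product partition are
  products of blocks, so block counts multiply, which gives (ii); a meet of k partitions
  has at most N^k blocks, which gives (iii).\<close>

lemma asd_partitionD:
  assumes "asd S P" and "\<pi> \<in> P"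
  shows "partition_on S \<pi>" and "finite \<pi>"
  using assms finite_elements unfolding asd_def by blast+

lemma partition_on_block_unique:
  assumes "partition_on S \<pi>" "A \<in> \<pi>" "B \<in> \<pi>" "x \<in> A" "x \<in> B"
  shows "A = B"
  using assms partition_onD2 disjointD by fastforce

lemma card_ge_if_asd_le_cm:
  assumes "asd S P" and "asd_le (cm_states m) (cm_parts m) S P"
  shows "\<exists>\<pi>\<in>P. m \<le> card \<pi>"
proof -
  obtain \<phi> \<alpha> where \<phi>: "\<phi> \<in> {1..m} \<rightarrow> S" and \<alpha>: "\<alpha> \<in> cm_parts m \<rightarrow> P"
    and refines: "\<forall>\<rho>\<in>cm_parts m. refines (part_comp (\<alpha> \<rho>) \<phi> {1..m}) \<rho>"
    using assms(2) unfolding asd_le_def cm_states_def by blast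
  define \<pi> where "\<pi> = \<alpha> ((\<lambda>i. {i}) ` {1..m})"
  have "\<pi> \<in> P" using \<alpha> unfolding \<pi>_def cm_parts_def by blast
  have discrete: "refines (part_comp \<pi> \<phi> {1..m}) ((\<lambda>i. {i}) ` {1..m})"
    using refines unfolding \<pi>_def cm_parts_def by blast
  have "\<forall>i\<in>{1..m}. \<exists>B\<in>\<pi>. \<phi> i \<in> B"
    using \<phi> partition_onD1[OF asd_partitionD(1)[OF assms(1) \<open>\<pi> \<in> P\<close>]] by blast
  then obtain g where g: "\<And>i. i \<in> {1..m} \<Longrightarrow> g i \<in> \<pi> \<and> \<phi> i \<in> g i" by metis
  \<comment> \<open>\<open>part_comp \<pi> \<phi>\<close> refines the discrete partition, so distinct states hit distinct blocks.\<close>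
  have "inj_on g {1..m}"
  proof (rule inj_onI)
    fix i j assume ij: "i \<in> {1..m}" "j \<in> {1..m}" "g i = g j"
    define block where "block = {y \<in> {1..m}. same_block \<pi> (\<phi> i) (\<phi> y)}"
    have "i \<in> block" "j \<in> block"
      using g ij unfolding block_def same_block_def by auto
    moreover have "block \<in> part_comp \<pi> \<phi> {1..m}"
      using ij(1) unfolding part_comp_def block_def by blast
    then obtain l where "block \<subseteq> {l}"
      using discrete unfolding refines_def by blast
    ultimately show "i = j" by blast
  qed
  moreover have "g ` {1..m} \<subseteq> \<pi>" using g by blast
  ultimately have "card {1..m} \<le> card \<pi>"
    using card_inj_on_le asd_partitionD(2)[OF assms(1) \<open>\<pi> \<in> P\<close>] by blast
  then show ?thesis using \<open>\<pi> \<in> P\<close> by auto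
qed

lemma asd_le_cm_if_card_ge:
  assumes "asd S P" and "\<pi> \<in> P" and "m \<le> card \<pi>"
  shows "asd_le (cm_states m) (cm_parts m) S P"
proof -
  note \<pi> = asd_partitionD[OF assms(1,2)]
  obtain h where h: "h ` {1..m} \<subseteq> \<pi>" "inj_on h {1..m}"
    using card_le_inj[of "{1..m}" \<pi>] \<pi>(2) assms(3) by auto
  have "\<forall>i\<in>{1..m}. \<exists>x. x \<in> h i"
    using h(1) partition_onD3[OF \<pi>(1)] by (metis all_not_in_conv image_subset_iff)
  then obtain \<phi> where \<phi>: "\<And>i. i \<in> {1..m} \<Longrightarrow> \<phi> i \<in> h i" by metis
  have separated: "i = j"
    if ij: "i \<in> {1..m}" "j \<in> {1..m}" and "same_block \<pi> (\<phi> i) (\<phi> j)" for i j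
  proof -
    obtain C where "C \<in> \<pi>" "\<phi> i \<in> C" "\<phi> j \<in> C"
      using \<open>same_block \<pi> (\<phi> i) (\<phi> j)\<close> unfolding same_block_def by blast
    then have "h i = h j"
      using partition_on_block_unique[OF \<pi>(1)] h(1) \<phi> ij by (metis image_subset_iff)
    then show ?thesis using h(2) ij inj_onD by metis
  qed
  have "refines (part_comp \<pi> \<phi> {1..m}) ((\<lambda>i. {i}) ` {1..m})"
    unfolding refines_def part_comp_def using separated by blast
  moreover have "\<phi> \<in> {1..m} \<rightarrow> S"
    using \<phi> h(1) partition_onD1[OF \<pi>(1)] by blast
  ultimately show ?thesis
    using assms(2) unfolding asd_le_def cm_states_def cm_parts_def
    by (intro exI[of _ \<phi>] exI[of _ "\<lambda>_. \<pi>"]) auto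
qed

lemma asd_le_cm_iff:
  assumes "asd S P"
  shows "asd_le (cm_states m) (cm_parts m) S P \<longleftrightarrow> (\<exists>\<pi>\<in>P. m \<le> card \<pi>)"
  using card_ge_if_asd_le_cm asd_le_cm_if_card_ge assms by blast

text \<open>Monotone on all naturals only because \<open>log 2 0 = 0\<close>.\<close>
lemma mono_log2_of_nat: "mono (\<lambda>n::nat. log 2 (real n))"
proof (rule monoI)
  fix m n :: nat assume "m \<le> n"
  then show "log 2 (real m) \<le> log 2 (real n)"
    by (cases "m = 0"; cases "n = 0") (auto simp: log_def[of 2 0])
qed

lemma Max_card_ge_1:
  assumes "asd S P" and "S \<noteq> {}" and "P \<noteq> {}"
  shows "1 \<le> Max (card ` P)"
proof -
  obtain \<pi> where "\<pi> \<in> P" using assms(3) by blast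
  note \<pi> = asd_partitionD[OF assms(1) this]
  have "\<pi> \<noteq> {}" using partition_onD1[OF \<pi>(1)] assms(2) by auto
  then have "1 \<le> card \<pi>" using \<pi>(2) by (simp add: Suc_le_eq card_gt_0_iff)
  also have "card \<pi> \<le> Max (card ` P)"
    using \<open>\<pi> \<in> P\<close> assms(1) unfolding asd_def by simp
  finally show ?thesis .
qed

lemma capacity_eq_log_Max_card:
  assumes "asd S P" and "S \<noteq> {}" and "P \<noteq> {}"
  shows "capacity S P = log 2 (real (Max (card ` P)))"
proof -
  define N where "N = Max (card ` P)"
  have "finite P" using assms(1) unfolding asd_def by blast
  then have "(\<exists>\<pi>\<in>P. m \<le> card \<pi>) \<longleftrightarrow> m \<le> N" for m
    unfolding N_def using assms(3) by (simp add: Max_ge_iff)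
  then have "{m. m \<ge> 1 \<and> asd_le (cm_states m) (cm_parts m) S P} = {1..N}"
    using asd_le_cm_iff[OF assms(1)] by auto
  moreover have "1 \<le> N" using Max_card_ge_1[OF assms] unfolding N_def .
  then have "Max {1..N} = N" by (intro Max_eqI) auto
  ultimately show ?thesis
    unfolding capacity_def N_def[symmetric]
    using mono_Max_commute[OF mono_log2_of_nat, of "{1..N}"] \<open>1 \<le> N\<close> by simp
qed

lemma Max_log_card_eq_log_Max_card:
  assumes "finite P" and "P \<noteq> {}"
  shows "Max ((\<lambda>\<pi>. log 2 (real (card \<pi>))) ` P) = log 2 (real (Max (card ` P)))"
  using mono_Max_commute[OF mono_log2_of_nat, of "card ` P"] assms by (simp add: image_image)

lemma prod_parts_eq_image: "prod_parts P P' = (\<lambda>(\<pi>, \<pi>'). prod_part \<pi> \<pi>') ` (P \<times> P')"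
  unfolding prod_parts_def by auto

lemma card_prod_part:
  assumes "{} \<notin> \<pi>" and "{} \<notin> \<pi>'"
  shows "card (prod_part \<pi> \<pi>') = card \<pi> * card \<pi>'"
proof -
  have "prod_part \<pi> \<pi>' = (\<lambda>(B, B'). B \<times> B') ` (\<pi> \<times> \<pi>')"
    unfolding prod_part_def by auto
  moreover have "inj_on (\<lambda>(B, B'). B \<times> B') (\<pi> \<times> \<pi>')"
    by (rule inj_onI) (use assms in \<open>auto simp: times_eq_iff\<close>)
  ultimately show ?thesis by (simp add: card_image card_cartesian_product)
qed

lemma partition_on_prod_part:
  assumes "partition_on S \<pi>" and "partition_on S' \<pi>'"
  shows "partition_on (S \<times> S') (prod_part \<pi> \<pi>')"
proof (rule partition_onI)
  show "\<Union>(prod_part \<pi> \<pi>') = S \<times> S'"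
    using assms[THEN partition_onD1] unfolding prod_part_def by blast
  show "{} \<notin> prod_part \<pi> \<pi>'"
    using assms[THEN partition_onD3] unfolding prod_part_def by (auto dest: sym)
next
  fix p q assume "p \<in> prod_part \<pi> \<pi>'" "q \<in> prod_part \<pi> \<pi>'" "p \<noteq> q"
  then obtain A A' B B' where pq: "p = A \<times> A'" "q = B \<times> B'"
    "A \<in> \<pi>" "A' \<in> \<pi>'" "B \<in> \<pi>" "B' \<in> \<pi>'"
    unfolding prod_part_def by blast
  then have "A \<inter> B = {} \<or> A' \<inter> B' = {}"
    using \<open>p \<noteq> q\<close> assms[THEN partition_onD2] disjointD by metis
  then show "disjnt p q" using pq unfolding disjnt_def by auto
qed

lemma asd_prod:
  assumes "asd S P" and "asd S' P'"
  shows "asd (S \<times> S') (prod_parts P P')"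
  using assms unfolding asd_def prod_parts_eq_image by (auto intro: partition_on_prod_part)

lemma Max_card_prod_parts:
  assumes "asd S P" and "P \<noteq> {}" and "asd S' P'" and "P' \<noteq> {}"
  shows "Max (card ` prod_parts P P') = Max (card ` P) * Max (card ` P')"
proof -
  have fin: "finite P" "finite P'" using assms(1,3) unfolding asd_def by blast+
  have card_eq: "card (prod_part \<pi> \<pi>') = card \<pi> * card \<pi>'" if "\<pi> \<in> P" "\<pi>' \<in> P'" for \<pi> \<pi>'
    using card_prod_part partition_onD3 asd_partitionD(1) assms(1,3) that by metis
  obtain \<pi> \<pi>' where max: "\<pi> \<in> P" "card \<pi> = Max (card ` P)" "\<pi>' \<in> P'" "card \<pi>' = Max (card ` P')"
    using Max_in[of "card ` P"] Max_in[of "card ` P'"] fin assms(2,4) by fastforce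
  show ?thesis
  proof (rule Max_eqI)
    show "finite (card ` prod_parts P P')" using fin by (simp add: prod_parts_eq_image)
    show "y \<le> Max (card ` P) * Max (card ` P')" if "y \<in> card ` prod_parts P P'" for y
      using that fin card_eq unfolding prod_parts_eq_image by (auto intro!: mult_le_mono)
    show "Max (card ` P) * Max (card ` P') \<in> card ` prod_parts P P'"
      using max card_eq unfolding prod_parts_eq_image by force
  qed
qed

lemma capacity_prod:
  assumes "asd S P" and "S \<noteq> {}" and "P \<noteq> {}"
    and "asd S' P'" and "S' \<noteq> {}" and "P' \<noteq> {}"
  shows "capacity (S \<times> S') (prod_parts P P') = capacity S P + capacity S' P'"
proof -
  have "prod_parts P P' \<noteq> {}" using assms(3,6) unfolding prod_parts_eq_image by blast
  then have "capacity (S \<times> S') (prod_parts P P') = log 2 (real (Max (card ` P) * Max (card ` P')))"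
    using capacity_eq_log_Max_card[OF asd_prod[OF assms(1,4)]] assms(2,5)
      Max_card_prod_parts[OF assms(1,3,4,6)] by simp
  also have "\<dots> = capacity S P + capacity S' P'"
    using Max_card_ge_1[OF assms(1-3)] Max_card_ge_1[OF assms(4-6)]
    by (simp add: log_mult capacity_eq_log_Max_card[OF assms(1-3)] capacity_eq_log_Max_card[OF assms(4-6)])
  finally show ?thesis .
qed

lemma meet_eq_image: "meet \<pi> \<rho> = (\<lambda>(A, B). A \<inter> B) ` (\<pi> \<times> \<rho>) - {{}}"
  unfolding meet_def by auto

lemma partition_on_meet:
  assumes "partition_on S \<pi>" and "partition_on S \<rho>"
  shows "partition_on S (meet \<pi> \<rho>)"
proof (rule partition_onI)
  show "\<Union>(meet \<pi> \<rho>) = S"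
    using assms[THEN partition_onD1] unfolding meet_def by blast
  show "{} \<notin> meet \<pi> \<rho>" unfolding meet_def by blast
next
  fix p q assume "p \<in> meet \<pi> \<rho>" "q \<in> meet \<pi> \<rho>" "p \<noteq> q"
  then obtain A A' B B' where pq: "p = A \<inter> B" "q = A' \<inter> B'"
    "A \<in> \<pi>" "B \<in> \<rho>" "A' \<in> \<pi>" "B' \<in> \<rho>"
    unfolding meet_def by blast
  then have "A \<inter> A' = {} \<or> B \<inter> B' = {}"
    using \<open>p \<noteq> q\<close> assms[THEN partition_onD2] disjointD by metis
  then show "disjnt p q" using pq unfolding disjnt_def by auto
qed

lemma finite_meet: "finite \<pi> \<Longrightarrow> finite \<rho> \<Longrightarrow> finite (meet \<pi> \<rho>)"
  unfolding meet_eq_image by simp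

lemma card_meet_le:
  assumes "finite \<pi>" and "finite \<rho>"
  shows "card (meet \<pi> \<rho>) \<le> card \<pi> * card \<rho>"
proof -
  have "card (meet \<pi> \<rho>) \<le> card ((\<lambda>(A, B). A \<inter> B) ` (\<pi> \<times> \<rho>))"
    unfolding meet_eq_image using assms by (intro card_mono) auto
  also have "\<dots> \<le> card (\<pi> \<times> \<rho>)" by (rule card_image_le) (use assms in simp)
  finally show ?thesis by (simp add: card_cartesian_product)
qed

lemma partition_on_meet_list:
  "\<pi>s \<noteq> [] \<Longrightarrow> \<forall>\<pi>\<in>set \<pi>s. partition_on S \<pi> \<Longrightarrow> partition_on S (meet_list \<pi>s)"
  by (induction \<pi>s rule: meet_list.induct) (auto intro: partition_on_meet)

lemma finite_meet_list: "\<forall>\<pi>\<in>set \<pi>s. finite \<pi> \<Longrightarrow> finite (meet_list \<pi>s)"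
  by (induction \<pi>s rule: meet_list.induct) (auto intro: finite_meet)

lemma card_meet_list_le:
  "\<forall>\<pi>\<in>set \<pi>s. finite \<pi> \<and> card \<pi> \<le> N \<Longrightarrow> card (meet_list \<pi>s) \<le> N ^ length \<pi>s"
proof (induction \<pi>s rule: meet_list.induct)
  case (3 \<pi> \<rho> \<rho>s)
  let ?\<mu> = "meet_list (\<rho> # \<rho>s)"
  have "card (meet \<pi> ?\<mu>) \<le> card \<pi> * card ?\<mu>"
    using 3 finite_meet_list[of "\<rho> # \<rho>s"] by (intro card_meet_le) auto
  also have "\<dots> \<le> N * N ^ length (\<rho> # \<rho>s)" using 3 by (intro mult_le_mono) auto
  finally show ?case by simp
qed simp_all

lemma asd_pow:
  assumes "asd S P" and "1 \<le> k"
  shows "asd S (pow_parts P k)"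
proof -
  have "finite P" using assms(1) unfolding asd_def by blast
  have "pow_parts P k \<subseteq> meet_list ` {\<pi>s. set \<pi>s \<subseteq> P \<and> length \<pi>s = k}"
    unfolding pow_parts_def by auto
  then have "finite (pow_parts P k)"
    by (rule finite_subset) (simp add: finite_lists_length_eq \<open>finite P\<close>)
  moreover have "partition_on S \<rho>" if \<rho>: "\<rho> \<in> pow_parts P k" for \<rho>
  proof -
    obtain \<pi>s where "\<rho> = meet_list \<pi>s" "length \<pi>s = k" "set \<pi>s \<subseteq> P"
      using \<rho> unfolding pow_parts_def by blast
    moreover have "\<pi>s \<noteq> []" using \<open>length \<pi>s = k\<close> assms(2) by auto
    ultimately show ?thesis
      using assms(1) partition_on_meet_list[of \<pi>s S] unfolding asd_def by blast
  qed
  ultimately show ?thesis using assms(1) unfolding asd_def by blast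
qed

lemma card_pow_parts_le:
  assumes "asd S P" and "\<rho> \<in> pow_parts P k"
  shows "card \<rho> \<le> Max (card ` P) ^ k"
proof -
  obtain \<pi>s where "\<rho> = meet_list \<pi>s" "length \<pi>s = k" "set \<pi>s \<subseteq> P"
    using assms(2) unfolding pow_parts_def by blast
  moreover have "finite \<pi> \<and> card \<pi> \<le> Max (card ` P)" if "\<pi> \<in> P" for \<pi>
    using assms(1) asd_partitionD(2) that unfolding asd_def by simp
  ultimately show ?thesis using card_meet_list_le by blast
qed

lemma capacity_pow_le:
  assumes "asd S P" and "S \<noteq> {}" and "P \<noteq> {}" and "1 \<le> k"
  shows "capacity S (pow_parts P k) \<le> real k * capacity S P"
proof -
  obtain \<pi> where "\<pi> \<in> P" using assms(3) by blast
  then have "meet_list (replicate k \<pi>) \<in> pow_parts P k" unfolding pow_parts_def by force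
  then have "pow_parts P k \<noteq> {}" by blast
  note asd_k = asd_pow[OF assms(1,4)]
  have "Max (card ` pow_parts P k) \<le> Max (card ` P) ^ k"
    using asd_k \<open>pow_parts P k \<noteq> {}\<close> card_pow_parts_le[OF assms(1)]
    unfolding asd_def by simp
  then have "capacity S (pow_parts P k) \<le> log 2 (real (Max (card ` P) ^ k))"
    using capacity_eq_log_Max_card[OF asd_k assms(2) \<open>pow_parts P k \<noteq> {}\<close>]
      mono_log2_of_nat by (metis monoD)
  also have "\<dots> = real k * capacity S P"
    using Max_card_ge_1[OF assms(1-3)]
    by (simp add: log_nat_power capacity_eq_log_Max_card[OF assms(1-3)])
  finally show ?thesis .
qed

theorem proposition3:
  fixes S :: "'a set" and P :: "'a set set set"
    and S' :: "'b set" and P' :: "'b set set set"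
    and k :: nat
  assumes "asd S P" and "S \<noteq> {}" and "P \<noteq> {}"
    and "asd S' P'" and "S' \<noteq> {}" and "P' \<noteq> {}"
  shows "capacity S P = Max ((\<lambda>\<pi>. log 2 (real (card \<pi>))) ` P)
         \<and> capacity (S \<times> S') (prod_parts P P') = capacity S P + capacity S' P'
         \<and> (k \<ge> 1 \<longrightarrow> capacity S (pow_parts P k) \<le> real k * capacity S P)"
proof (intro conjI impI)
  have "finite P" using assms(1) unfolding asd_def by blast
  then show "capacity S P = Max ((\<lambda>\<pi>. log 2 (real (card \<pi>))) ` P)"
    using capacity_eq_log_Max_card[OF assms(1-3)] Max_log_card_eq_log_Max_card[OF _ assms(3)] by simp
  show "capacity (S \<times> S') (prod_parts P P') = capacity S P + capacity S' P'"
    using capacity_prod[OF assms] .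
  show "capacity S (pow_parts P k) \<le> real k * capacity S P" if "k \<ge> 1"
    using capacity_pow_le[OF assms(1-3) that] .
qed

end
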